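(* Let $G$ be a finite, simple, connected graph with $n$ vertices $v_1,\ldots,v_n$ and $m$ edges, let $a\in[0,1]$ and $b\in\mathbb{R}$, and let $\tilde{\mathbf U}$ be the generalized Grover matrix of $G$ with parameters $a,b$. Then \[ \det(\mathbf I_{2m}-u\tilde{\mathbf U})=\frac{(1-b^2u^2)^{m-n}}{\prod_{i=1}^n \deg v_i}\det\Big(\mathbf D\big\{(1+b(2a-b)u^2)\mathbf I_n+b(b-a)u^2\mathbf D\big\}-u\mathbf A_d\Big), \] where $\mathbf D$ is the $n\times n$ diagonal matrix with $\mathbf D_{v_iv_i}=\deg v_i$, and $\mathbf A_d=(A^{(d)}_{uv})_{u,v\in V(G)}$ is the $n\times n$ matrix with $A^{(d)}_{uv}=(2-\deg u)a+b\deg u$ if $u$ and $v$ are adjacent, and $A^{(d)}_{uv}=0$ otherwise.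
   Context: For a simple graph $G$, $D(G)$ denotes the set of $2m$ arcs: for each edge $uv$ both $(u,v)$ and $(v,u)$. For an arc $e=(u,v)$, $o(e)=u$, $t(e)=v$, $e^{-1}=(v,u)$; $d_v=\deg v$ is the degree of $v$. For $a\in[0,1]$, $b\in\mathbb R$, the generalized Grover matrix $\tilde{\mathbf U}=(\tilde U_{ef})_{e,f\in D(G)}$ is the $2m\times 2m$ matrix with $\tilde U_{ef}=(2/d_{t(f)}-1)a+b$ if $t(f)=o(e)$ and $f\neq e^{-1}$; $\tilde U_{ef}=(2/d_{t(f)}-1)a$ if $f=e^{-1}$; and $\tilde U_{ef}=0$ otherwise. The identity is an identity of polynomials (rational functions) in the variable $u$. *)

theory Defs
  imports "HOL-Combinatorics.Permutations" Complex_Main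
begin

definition simple_graph :: "'a set \<Rightarrow> ('a \<Rightarrow> 'a \<Rightarrow> bool) \<Rightarrow> bool" where
  "simple_graph V E \<longleftrightarrow> finite V \<and> (\<forall>x y. E x y \<longrightarrow> x \<in> V \<and> y \<in> V)
     \<and> (\<forall>x y. E x y \<longrightarrow> E y x) \<and> (\<forall>x. \<not> E x x)"

definition graph_connected :: "'a set \<Rightarrow> ('a \<Rightarrow> 'a \<Rightarrow> bool) \<Rightarrow> bool" where
  "graph_connected V E \<longleftrightarrow> (\<forall>x\<in>V. \<forall>y\<in>V. E\<^sup>*\<^sup>* x y)"

definition edges :: "'a set \<Rightarrow> ('a \<Rightarrow> 'a \<Rightarrow> bool) \<Rightarrow> 'a set set" where
  "edges V E = {{x, y} | x y. x \<in> V \<and> y \<in> V \<and> E x y}"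

definition arcs :: "'a set \<Rightarrow> ('a \<Rightarrow> 'a \<Rightarrow> bool) \<Rightarrow> ('a \<times> 'a) set" where
  "arcs V E = {(x, y). x \<in> V \<and> y \<in> V \<and> E x y}"

definition deg :: "'a set \<Rightarrow> ('a \<Rightarrow> 'a \<Rightarrow> bool) \<Rightarrow> 'a \<Rightarrow> nat" where
  "deg V E v = card {w \<in> V. E v w}"

text \<open>Generalized Grover matrix; for an arc e = (o(e), t(e)), e^{-1} = prod.swap e.\<close>
definition grover :: "'a set \<Rightarrow> ('a \<Rightarrow> 'a \<Rightarrow> bool) \<Rightarrow> real \<Rightarrow> real
    \<Rightarrow> ('a \<times> 'a) \<Rightarrow> ('a \<times> 'a) \<Rightarrow> real" where
  "grover V E a b e f =
     (if snd f = fst e \<and> f \<noteq> prod.swap e then (2 / real (deg V E (snd f)) - 1) * a + b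
      else if f = prod.swap e then (2 / real (deg V E (snd f)) - 1) * a
      else 0)"

text \<open>Matrices indexed by a finite set I, as functions I \<Rightarrow> I \<Rightarrow> real.\<close>
definition det_on :: "'i set \<Rightarrow> ('i \<Rightarrow> 'i \<Rightarrow> real) \<Rightarrow> real" where
  "det_on I M = (\<Sum>p | p permutes I. of_int (sign p) * (\<Prod>i\<in>I. M i (p i)))"

definition idm :: "'i \<Rightarrow> 'i \<Rightarrow> real" where
  "idm i j = (if i = j then 1 else 0)"

definition matmul :: "'i set \<Rightarrow> ('i \<Rightarrow> 'i \<Rightarrow> real) \<Rightarrow> ('i \<Rightarrow> 'i \<Rightarrow> real) \<Rightarrow> 'i \<Rightarrow> 'i \<Rightarrow> real" where
  "matmul I A B i j = (\<Sum>k\<in>I. A i k * B k j)"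

definition degmat :: "'a set \<Rightarrow> ('a \<Rightarrow> 'a \<Rightarrow> bool) \<Rightarrow> 'a \<Rightarrow> 'a \<Rightarrow> real" where
  "degmat V E x y = (if x = y then real (deg V E x) else 0)"

definition Ad :: "'a set \<Rightarrow> ('a \<Rightarrow> 'a \<Rightarrow> bool) \<Rightarrow> real \<Rightarrow> real \<Rightarrow> 'a \<Rightarrow> 'a \<Rightarrow> real" where
  "Ad V E a b x y = (if E x y then (2 - real (deg V E x)) * a + b * real (deg V E x) else 0)"

end

theory Submission
  imports Defs "Jordan_Normal_Form.Determinant"
begin

text \<open>
  Write c v = (2 / deg v - 1) a + b. Then the generalized Grover matrix factors as
  \<open>U = K L - b J\<close>, where \<open>K\<close> (arcs \<times> vertices) sends an arc to its origin,
  \<open>L\<close> (vertices \<times> arcs) is the terminus incidence scaled by c, and \<open>J\<close> is the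
  permutation matrix of arc reversal. Since \<open>J\<close> is a fixed-point-free involution,
  \<open>(I - u b J)(I + u b J) = (1 - b\<^sup>2 u\<^sup>2) I\<close> and \<open>det (I + u b J) = (1 - b\<^sup>2 u\<^sup>2)\<^sup>m\<close>.
  Multiplying \<open>I - u U = (I + u b J) - u K L\<close> by \<open>I - u b J\<close> and applying
  Sylvester's determinant identity moves the determinant from the 2m arcs to the
  n vertices, where the matrix becomes \<open>(1 - b\<^sup>2 u\<^sup>2) I - u C (A - u b D)\<close> with
  \<open>C = diag c\<close>; multiplying by \<open>D\<close> (so that \<open>D C\<close> has entries \<open>(2 - deg v) a + b deg v\<close>)
  gives the right-hand side.
\<close>

section \<open>Determinants of matrices indexed by finite sets\<close>

definition enum_on :: "'i set \<Rightarrow> nat \<Rightarrow> 'i" where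
  "enum_on I = (SOME g. bij_betw g {0..<card I} I)"

definition mat_on :: "'i set \<Rightarrow> 'j set \<Rightarrow> ('i \<Rightarrow> 'j \<Rightarrow> 'a) \<Rightarrow> 'a mat" where
  "mat_on I J F = mat (card I) (card J) (\<lambda>(i, j). F (enum_on I i) (enum_on J j))"

lemma bij_betw_enum_on: "finite I \<Longrightarrow> bij_betw (enum_on I) {0..<card I} I"
  unfolding enum_on_def by (rule someI_ex[OF ex_bij_betw_nat_finite])

lemma enum_on_eq_iff:
  "finite I \<Longrightarrow> i < card I \<Longrightarrow> j < card I \<Longrightarrow> enum_on I i = enum_on I j \<longleftrightarrow> i = j"
  using bij_betw_enum_on by (fastforce simp: bij_betw_def inj_on_def)

lemma mat_on_carrier [simp]: "mat_on I J F \<in> carrier_mat (card I) (card J)"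
  and dim_mat_on [simp]: "dim_row (mat_on I J F) = card I" "dim_col (mat_on I J F) = card J"
  and index_mat_on [simp]:
    "i < card I \<Longrightarrow> j < card J \<Longrightarrow> mat_on I J F $$ (i, j) = F (enum_on I i) (enum_on J j)"
  by (simp_all add: mat_on_def)

lemma mat_on_mult:
  assumes "finite J"
  shows "mat_on I J F * mat_on J K G = mat_on I K (\<lambda>x z. \<Sum>y\<in>J. F x y * G y z)"
proof (rule eq_matI)
  fix i k assume "i < dim_row (mat_on I K (\<lambda>x z. \<Sum>y\<in>J. F x y * G y z))"
    "k < dim_col (mat_on I K (\<lambda>x z. \<Sum>y\<in>J. F x y * G y z))"
  then show "(mat_on I J F * mat_on J K G) $$ (i, k) = mat_on I K (\<lambda>x z. \<Sum>y\<in>J. F x y * G y z) $$ (i, k)"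
    by (simp add: scalar_prod_def) (rule sum.reindex_bij_betw[OF bij_betw_enum_on[OF assms]])
qed simp_all

lemma mat_on_scaled_idm_minus:
  assumes "finite I"
  shows "mat_on I I (\<lambda>x y. s * idm x y - F x y) = s \<cdot>\<^sub>m 1\<^sub>m (card I) - mat_on I I F"
  by (rule eq_matI) (use assms in \<open>simp_all add: idm_def enum_on_eq_iff\<close>)

lemma det_on_eq_det_mat:
  assumes g: "bij_betw g {0..<k} I"
  shows "det_on I F = det (mat k k (\<lambda>(i, j). F (g i) (g j)))"
proof -
  let ?A = "{0..<k}" and ?p = "map_permutation {0..<k} g"
  have inj: "inj_on g ?A" using g by (simp add: bij_betw_def)
  have "?p = (\<lambda>p x. if x \<in> I then g (p (inv_into ?A g x)) else x)"
    using bij_betw_imp_surj_on[OF g] by (simp add: fun_eq_iff map_permutation_def restrict_id_def)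
  then have "bij_betw ?p {p. p permutes ?A} {q. q permutes I}"
    using bij_betw_permutations[OF g] by simp
  then have "det_on I F = (\<Sum>p | p permutes ?A. of_int (sign (?p p)) * (\<Prod>x\<in>I. F x (?p p x)))"
    unfolding det_on_def by (rule sum.reindex_bij_betw[symmetric])
  also have "\<dots> = (\<Sum>p | p permutes ?A. of_int (sign p) * (\<Prod>i\<in>?A. F (g i) (g (p i))))"
  proof (rule sum.cong[OF refl])
    fix p assume "p \<in> {p. p permutes ?A}"
    then have p: "p permutes ?A" by simp
    have "(\<Prod>x\<in>I. F x (?p p x)) = (\<Prod>i\<in>?A. F (g i) (?p p (g i)))"
      by (rule prod.reindex_bij_betw[OF g, symmetric])
    also have "\<dots> = (\<Prod>i\<in>?A. F (g i) (g (p i)))"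
      by (rule prod.cong[OF refl]) (simp add: map_permutation_apply[OF inj])
    finally show "of_int (sign (?p p)) * (\<Prod>x\<in>I. F x (?p p x))
        = of_int (sign p) * (\<Prod>i\<in>?A. F (g i) (g (p i)))"
      using sign_map_permutation[OF inj p] by simp
  qed
  also have "\<dots> = det (mat k k (\<lambda>(i, j). F (g i) (g j)))"
    by (subst det_def'[of _ k]) (auto intro!: sum.cong prod.cong simp: permutes_in_image)
  finally show ?thesis .
qed

lemma det_on_eq_det_mat_on: "finite I \<Longrightarrow> det_on I F = det (mat_on I I F)"
  unfolding mat_on_def by (rule det_on_eq_det_mat[OF bij_betw_enum_on])

lemma det_on_cong:
  assumes "\<And>x y. x \<in> I \<Longrightarrow> y \<in> I \<Longrightarrow> F x y = G x y"
  shows "det_on I F = det_on I G"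
  unfolding det_on_def using assms by (auto intro!: sum.cong prod.cong simp: permutes_in_image)

lemma det_on_matmul:
  assumes "finite I"
  shows "det_on I (matmul I A B) = det_on I A * det_on I B"
proof -
  have "mat_on I I (matmul I A B) = mat_on I I A * mat_on I I B"
    using assms by (simp add: mat_on_mult matmul_def[abs_def])
  then show ?thesis
    using assms by (simp add: det_on_eq_det_mat_on det_mult[of _ "card I"])
qed

lemma det_on_diagonal:
  assumes "finite I"
  shows "det_on I (\<lambda>x y. d x * idm x y) = (\<Prod>x\<in>I. d x)"
proof -
  have "det_on I (\<lambda>x y. d x * idm x y) = (\<Sum>p\<in>{id}. of_int (sign p) * (\<Prod>x\<in>I. d x * idm x (p x)))"
    unfolding det_on_def
  proof (rule sum.mono_neutral_right)
    show "\<forall>p\<in>{p. p permutes I} - {id}. of_int (sign p) * (\<Prod>x\<in>I. d x * idm x (p x)) = 0"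
    proof
      fix p assume "p \<in> {p. p permutes I} - {id}"
      then obtain x where "x \<in> I" "p x \<noteq> x"
        by (metis (mono_tags) DiffE eq_id_iff mem_Collect_eq permutes_def singletonI)
      then show "of_int (sign p) * (\<Prod>x\<in>I. d x * idm x (p x)) = 0"
        using assms by (auto simp: idm_def intro!: bexI[of _ x])
    qed
  qed (use assms in \<open>auto simp: finite_permutations permutes_id\<close>)
  then show ?thesis by (simp add: idm_def)
qed

lemma det_sylvester_scaled:
  fixes A :: "'a :: idom mat"
  assumes A: "A \<in> carrier_mat k n" and B: "B \<in> carrier_mat n k"
  shows "s ^ n * det (s \<cdot>\<^sub>m 1\<^sub>m k - A * B) = s ^ k * det (s \<cdot>\<^sub>m 1\<^sub>m n - B * A)"
proof -
  define M where "M = four_block_mat (s \<cdot>\<^sub>m 1\<^sub>m k) A B (1\<^sub>m n)"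
  have M: "M \<in> carrier_mat (k + n) (k + n)" using A B by (simp add: M_def)
  have AB: "s \<cdot>\<^sub>m 1\<^sub>m k - A * B \<in> carrier_mat k k" and BA: "s \<cdot>\<^sub>m 1\<^sub>m n - B * A \<in> carrier_mat n n"
    using A B by auto
  note mult = mult_four_block_mat[OF smult_carrier_mat[OF one_carrier_mat] A B one_carrier_mat]
  have "M * four_block_mat (1\<^sub>m k) (0\<^sub>m k n) (- B) (1\<^sub>m n)
      = four_block_mat (s \<cdot>\<^sub>m 1\<^sub>m k - A * B) A (0\<^sub>m n k) (1\<^sub>m n)"
    unfolding M_def using A B
    by (subst mult[OF one_carrier_mat zero_carrier_mat uminus_carrier_mat[OF B] one_carrier_mat])
      (auto simp: mult_minus_distrib_mat minus_add_uminus_mat)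
  from arg_cong[OF this, of det] have "det M = det (s \<cdot>\<^sub>m 1\<^sub>m k - A * B)"
    using A B by (simp add: det_mult[OF M] det_four_block_mat_upper_right_zero[of _ k _ n]
        det_four_block_mat_lower_left_zero[OF AB A])
  moreover have "M * four_block_mat (1\<^sub>m k) (- A) (0\<^sub>m n k) (s \<cdot>\<^sub>m 1\<^sub>m n)
      = four_block_mat (s \<cdot>\<^sub>m 1\<^sub>m k) (0\<^sub>m k n) B (s \<cdot>\<^sub>m 1\<^sub>m n - B * A)"
  proof -
    have "- (B * A) + s \<cdot>\<^sub>m 1\<^sub>m n = s \<cdot>\<^sub>m 1\<^sub>m n - B * A"
      using A B by (subst comm_add_mat[of _ n n]) (auto simp: add_uminus_minus_mat[of _ n n])
    then show ?thesis
      unfolding M_def using A B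
      by (subst mult[OF one_carrier_mat uminus_carrier_mat[OF A] zero_carrier_mat
            smult_carrier_mat[OF one_carrier_mat]])
        (auto simp: mult_minus_distrib_mat mult_smult_assoc_mat[of _ k k] mult_smult_distrib)
  qed
  from arg_cong[OF this, of det] have "det M * s ^ n = s ^ k * det (s \<cdot>\<^sub>m 1\<^sub>m n - B * A)"
    using A B by (simp add: det_mult[OF M] det_four_block_mat_lower_left_zero[of _ k _ n]
        det_four_block_mat_upper_right_zero[OF smult_carrier_mat[OF one_carrier_mat] _ B BA])
  ultimately show ?thesis by (simp add: mult.commute)
qed

lemma det_on_sylvester:
  assumes "finite I" "finite J"
  shows "s ^ card J * det_on I (\<lambda>x y. s * idm x y - (\<Sum>z\<in>J. X x z * Y z y))
       = s ^ card I * det_on J (\<lambda>z w. s * idm z w - (\<Sum>x\<in>I. Y z x * X x w))"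
proof -
  have "s ^ card J * det (s \<cdot>\<^sub>m 1\<^sub>m (card I) - mat_on I J X * mat_on J I Y)
      = s ^ card I * det (s \<cdot>\<^sub>m 1\<^sub>m (card J) - mat_on J I Y * mat_on I J X)"
    by (rule det_sylvester_scaled) simp_all
  then show ?thesis
    using assms by (simp add: det_on_eq_det_mat_on mat_on_scaled_idm_minus mat_on_mult)
qed

section \<open>Perturbations of a fixed-point-free involution\<close>

locale involution_halves =
  fixes I :: "'i set" and \<sigma> :: "'i \<Rightarrow> 'i" and H :: "'i set"
  assumes finite_I: "finite I"
    and involutive: "\<And>x. x \<in> I \<Longrightarrow> \<sigma> (\<sigma> x) = x"
    and disjoint: "H \<inter> \<sigma> ` H = {}"
    and covers: "H \<union> \<sigma> ` H = I"
begin

lemma finite_half: "finite H"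
  using finite_I covers by (metis finite_Un)

lemma inj_on_half: "inj_on \<sigma> H"
  using involutive covers by (metis UnCI inj_onI)

lemma card_eq: "card I = card H + card H"
  using covers card_Un_disjoint[OF finite_half finite_imageI[OF finite_half] disjoint]
    card_image[OF inj_on_half] by simp

lemma involution_closed_fixpoint_free:
  assumes "x \<in> I"
  shows "\<sigma> x \<in> I" "\<sigma> x \<noteq> x"
proof -
  have out: "y \<notin> \<sigma> ` H" if "y \<in> H" for y using that disjoint by blast
  consider "x \<in> H" | h where "h \<in> H" "x = \<sigma> h" using assms covers by blast
  then have "\<sigma> x \<in> I \<and> \<sigma> x \<noteq> x"
  proof cases
    case 1
    then show ?thesis using out[OF 1] covers by force
  next
    case 2
    then have "\<sigma> x = h" using involutive covers by blast
    then show ?thesis using 2 out[OF 2(1)] covers by force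
  qed
  then show "\<sigma> x \<in> I" "\<sigma> x \<noteq> x" by simp_all
qed

definition enum_halves :: "nat \<Rightarrow> 'i" where
  "enum_halves i = (if i < card H then enum_on H i else \<sigma> (enum_on H (i - card H)))"

lemma bij_betw_enum_halves: "bij_betw enum_halves {0..<card H + card H} I"
proof -
  let ?m = "card H"
  have h: "bij_betw (enum_on H) {0..<?m} H" using finite_half by (rule bij_betw_enum_on)
  have "bij_betw enum_halves {0..<?m} H = bij_betw (enum_on H) {0..<?m} H"
    by (rule bij_betw_cong) (simp add: enum_halves_def)
  with h have "bij_betw enum_halves {0..<?m} H" by simp
  moreover have "bij_betw enum_halves {?m..<?m+?m} (\<sigma> ` H)"
  proof -
    have "bij_betw (\<lambda>i. i - ?m) {?m..<?m+?m} {0..<?m}"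
      by (rule bij_betw_byWitness[where f' = "\<lambda>i. i + ?m"]) auto
    then have "bij_betw (\<sigma> \<circ> (enum_on H \<circ> (\<lambda>i. i - ?m))) {?m..<?m+?m} (\<sigma> ` H)"
      by (rule bij_betw_trans[OF bij_betw_trans[OF _ h] inj_on_imp_bij_betw[OF inj_on_half]])
    moreover have "bij_betw enum_halves {?m..<?m+?m} (\<sigma> ` H)
        = bij_betw (\<sigma> \<circ> (enum_on H \<circ> (\<lambda>i. i - ?m))) {?m..<?m+?m} (\<sigma> ` H)"
      by (rule bij_betw_cong) (simp add: enum_halves_def)
    ultimately show ?thesis by simp
  qed
  ultimately have "bij_betw enum_halves ({0..<?m} \<union> {?m..<?m+?m}) (H \<union> \<sigma> ` H)"
    using disjoint by (rule bij_betw_combine)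
  then show ?thesis using covers by (simp add: ivl_disj_un_two)
qed

lemma involution_enum_halves:
  assumes "i < card H + card H"
  shows "\<sigma> (enum_halves i) = enum_halves (if i < card H then i + card H else i - card H)"
proof (cases "i < card H")
  case False
  then have "enum_on H (i - card H) \<in> I"
    using bij_betwE[OF bij_betw_enum_on[OF finite_half]] covers assms by auto
  moreover have "i - card H < card H" using False assms by linarith
  ultimately show ?thesis using False involutive by (simp add: enum_halves_def)
qed (simp add: enum_halves_def)

text \<open>Listing \<open>H\<close> first and \<open>\<sigma> ` H\<close> second turns the matrix into the block matrix
  \<open>[[1, c], [c, 1]]\<close>.\<close>

lemma det_on_involution:
  "det_on I (\<lambda>x y. idm x y + c * (if y = \<sigma> x then 1 else 0)) = (1 - c\<^sup>2) ^ card H"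
proof -
  let ?m = "card H" and ?g = enum_halves
  have g_eq_iff: "?g i = ?g j \<longleftrightarrow> i = j" if "i < ?m + ?m" "j < ?m + ?m" for i j
    using bij_betw_imp_inj_on[OF bij_betw_enum_halves] that by (auto dest: inj_onD)
  have "mat (?m + ?m) (?m + ?m) (\<lambda>(i, j). idm (?g i) (?g j) + c * (if ?g j = \<sigma> (?g i) then 1 else 0))
      = four_block_mat (1\<^sub>m ?m) (c \<cdot>\<^sub>m 1\<^sub>m ?m) (c \<cdot>\<^sub>m 1\<^sub>m ?m) (1\<^sub>m ?m)"
    by (rule eq_matI) (auto simp: idm_def g_eq_iff involution_enum_halves)
  then have "det_on I (\<lambda>x y. idm x y + c * (if y = \<sigma> x then 1 else 0))
      = det (four_block_mat (1\<^sub>m ?m) (c \<cdot>\<^sub>m 1\<^sub>m ?m) (c \<cdot>\<^sub>m 1\<^sub>m ?m) (1\<^sub>m ?m))"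
    by (simp add: det_on_eq_det_mat[OF bij_betw_enum_halves])
  also have "\<dots> = det (1\<^sub>m ?m * 1\<^sub>m ?m - c \<cdot>\<^sub>m 1\<^sub>m ?m * (c \<cdot>\<^sub>m 1\<^sub>m ?m))"
    by (rule det_four_block_mat) auto
  also have "1\<^sub>m ?m * 1\<^sub>m ?m - c \<cdot>\<^sub>m 1\<^sub>m ?m * (c \<cdot>\<^sub>m 1\<^sub>m ?m) = (1 - c\<^sup>2) \<cdot>\<^sub>m 1\<^sub>m ?m"
    by (rule eq_matI) (auto simp: power2_eq_square)
  finally show ?thesis by simp
qed

lemma sum_idm_minus_involution:
  assumes "x \<in> I"
  shows "(\<Sum>y\<in>I. (idm x y - t * (if y = \<sigma> x then 1 else 0)) * F y) = F x - t * F (\<sigma> x)"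
proof -
  have "(\<Sum>y\<in>I. (idm x y - t * (if y = \<sigma> x then 1 else 0)) * F y)
      = (\<Sum>y\<in>I. (if y = x then F y else 0) - t * (if y = \<sigma> x then F y else 0))"
    by (rule sum.cong) (auto simp: idm_def algebra_simps)
  then show ?thesis
    using assms involution_closed_fixpoint_free[OF assms] finite_I by (simp add: sum_subtractf sum_distrib_left[symmetric])
qed

text \<open>Left multiplication by \<open>R = I - t J\<close>, which satisfies \<open>R (I + t J) = (1 - t\<^sup>2) I\<close>,
  followed by Sylvester's identity.\<close>

lemma det_on_involution_sylvester:
  fixes X :: "'i \<Rightarrow> 'j \<Rightarrow> real" and Y :: "'j \<Rightarrow> 'i \<Rightarrow> real"
  assumes J: "finite J" and t: "t\<^sup>2 \<noteq> 1"
  shows "det_on I (\<lambda>x y. idm x y + t * (if y = \<sigma> x then 1 else 0) - (\<Sum>z\<in>J. X x z * Y z y))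
       = (1 - t\<^sup>2) ^ card H / (1 - t\<^sup>2) ^ card J
         * det_on J (\<lambda>z w. (1 - t\<^sup>2) * idm z w - (\<Sum>x\<in>I. Y z x * (X x w - t * X (\<sigma> x) w)))"
proof -
  define s where "s = 1 - t\<^sup>2"
  define R where "R x y = idm x y - t * (if y = \<sigma> x then 1 else 0)" for x y
  define P where "P x y = idm x y + t * (if y = \<sigma> x then 1 else 0) - (\<Sum>z\<in>J. X x z * Y z y)" for x y
  define Q where "Q x y = s * idm x y - (\<Sum>z\<in>J. (X x z - t * X (\<sigma> x) z) * Y z y)" for x y
  define W where "W z w = s * idm z w - (\<Sum>x\<in>I. Y z x * (X x w - t * X (\<sigma> x) w))" for z w
  have s: "s \<noteq> 0" using t by (simp add: s_def)
  have RP: "matmul I R P x y = Q x y" if "x \<in> I" for x y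
  proof -
    have "matmul I R P x y = P x y - t * P (\<sigma> x) y"
      unfolding matmul_def R_def by (rule sum_idm_minus_involution[OF that])
    also have "\<dots> = s * idm x y - ((\<Sum>z\<in>J. X x z * Y z y) - t * (\<Sum>z\<in>J. X (\<sigma> x) z * Y z y))"
      using involutive[OF that] by (auto simp: P_def s_def idm_def power2_eq_square algebra_simps)
    finally show ?thesis
      by (simp add: Q_def sum_subtractf sum_distrib_left left_diff_distrib mult.assoc)
  qed
  have "s ^ card H * det_on I P = det_on I R * det_on I P"
    using det_on_involution[of "- t"] by (simp add: R_def[abs_def] s_def)
  also have "\<dots> = det_on I Q"
    using det_on_cong[OF RP] by (simp add: det_on_matmul[OF finite_I, symmetric])
  finally have "s ^ card H * (s ^ card J * det_on I P) = s ^ card J * det_on I Q"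
    by (simp add: ac_simps)
  also have "\<dots> = s ^ card H * (s ^ card H * det_on J W)"
    using det_on_sylvester[OF finite_I J, of s "\<lambda>x z. X x z - t * X (\<sigma> x) z" Y]
    unfolding card_eq Q_def[abs_def] W_def[abs_def] by (simp add: power_add)
  finally have "s ^ card J * det_on I P = s ^ card H * det_on J W"
    using s by simp
  then show ?thesis
    using s unfolding P_def[symmetric] W_def[symmetric] s_def[symmetric] by (simp add: field_simps)
qed

end

section \<open>Arcs of a simple graph\<close>

lemma simple_graphD:
  assumes "simple_graph V E"
  shows "finite V" and "E x y \<Longrightarrow> x \<in> V" and "E x y \<Longrightarrow> y \<in> V"
    and "E x y \<Longrightarrow> E y x" and "\<not> E x x"
  using assms by (auto simp: simple_graph_def)

lemma mem_arcs [simp]: "(x, y) \<in> arcs V E \<longleftrightarrow> x \<in> V \<and> y \<in> V \<and> E x y"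
  by (simp add: arcs_def)

lemma finite_arcs: "simple_graph V E \<Longrightarrow> finite (arcs V E)"
  by (auto simp: arcs_def dest: simple_graphD(1) intro: finite_subset[of _ "V \<times> V"])

lemma deg_gt_0:
  assumes "simple_graph V E" "graph_connected V E" "card V \<ge> 2" "v \<in> V"
  shows "deg V E v > 0"
proof -
  note fin = simple_graphD(1)[OF assms(1)]
  have "\<not> card V \<le> Suc 0" using assms(3) by simp
  then obtain x y where "x \<in> V" "y \<in> V" "x \<noteq> y"
    using card_le_Suc0_iff_eq[OF fin] by blast
  then obtain w where w: "w \<in> V" "w \<noteq> v" by (cases "x = v") auto
  have "E\<^sup>*\<^sup>* v w" using assms(2,4) w by (simp add: graph_connected_def)
  then obtain z where "E v z" using w(2) by (metis converse_rtranclpE)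
  then have "z \<in> {x \<in> V. E v x}" using simple_graphD(3)[OF assms(1)] by simp
  moreover have "finite {x \<in> V. E v x}" using fin by simp
  ultimately show ?thesis unfolding deg_def by (metis card_gt_0_iff empty_iff)
qed

lemma sum_arcs_into:
  assumes "simple_graph V E" "v \<in> V"
  shows "(\<Sum>e\<in>arcs V E. if snd e = v then F (fst e) else 0) = (\<Sum>w | w \<in> V \<and> E v w. F w)"
proof -
  have "{e \<in> arcs V E. snd e = v} = (\<lambda>w. (w, v)) ` {w. w \<in> V \<and> E v w}"
    using assms simple_graphD(4)[OF assms(1)] by auto
  then show ?thesis
    using finite_arcs[OF assms(1)] by (simp add: sum.inter_filter[symmetric] sum.reindex inj_on_def)
qed

definition ascending_arcs :: "'a set \<Rightarrow> ('a \<Rightarrow> 'a \<Rightarrow> bool) \<Rightarrow> ('a \<Rightarrow> nat) \<Rightarrow> ('a \<times> 'a) set" where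
  "ascending_arcs V E r = {(x, y). x \<in> V \<and> y \<in> V \<and> E x y \<and> r x < r y}"

lemma ascending_arcs_disjoint: "ascending_arcs V E r \<inter> prod.swap ` ascending_arcs V E r = {}"
  by (auto simp: ascending_arcs_def)

lemma ascending_arcs_covers:
  assumes G: "simple_graph V E" and r: "inj_on r V"
  shows "ascending_arcs V E r \<union> prod.swap ` ascending_arcs V E r = arcs V E"
proof
  show "ascending_arcs V E r \<union> prod.swap ` ascending_arcs V E r \<subseteq> arcs V E"
    using simple_graphD(4)[OF G] by (auto simp: ascending_arcs_def)
  show "arcs V E \<subseteq> ascending_arcs V E r \<union> prod.swap ` ascending_arcs V E r"
  proof
    fix e assume "e \<in> arcs V E"
    then obtain x y where e: "e = (x, y)" "(x, y) \<in> arcs V E" by (cases e) auto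
    show "e \<in> ascending_arcs V E r \<union> prod.swap ` ascending_arcs V E r"
    proof (cases "(x, y) \<in> ascending_arcs V E r")
      case False
      have "x \<noteq> y" using e(2) simple_graphD(5)[OF G, of x] by auto
      then have "r x \<noteq> r y" using e(2) r by (auto dest: inj_onD)
      then have "(y, x) \<in> ascending_arcs V E r"
        using e(2) False simple_graphD(4)[OF G, of x y] by (auto simp: ascending_arcs_def)
      then have "(x, y) \<in> prod.swap ` ascending_arcs V E r" by (rule rev_image_eqI) simp
      then show ?thesis using e(1) by simp
    qed (simp add: e(1))
  qed
qed

lemma bij_betw_ascending_arcs_edges:
  assumes G: "simple_graph V E" and r: "inj_on r V"
  shows "bij_betw (\<lambda>(x, y). {x, y}) (ascending_arcs V E r) (edges V E)"
proof (rule bij_betw_imageI)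
  show "inj_on (\<lambda>(x, y). {x, y}) (ascending_arcs V E r)"
    by (auto simp: inj_on_def ascending_arcs_def doubleton_eq_iff)
  show "(\<lambda>(x, y). {x, y}) ` ascending_arcs V E r = edges V E"
  proof
    show "(\<lambda>(x, y). {x, y}) ` ascending_arcs V E r \<subseteq> edges V E"
      by (auto simp: ascending_arcs_def edges_def)
    show "edges V E \<subseteq> (\<lambda>(x, y). {x, y}) ` ascending_arcs V E r"
    proof
      fix s assume "s \<in> edges V E"
      then obtain x y where xy: "s = {x, y}" "(x, y) \<in> arcs V E" by (auto simp: edges_def)
      then have "(x, y) \<in> ascending_arcs V E r \<or> (y, x) \<in> ascending_arcs V E r"
        using ascending_arcs_covers[OF G r] by auto
      then show "s \<in> (\<lambda>(x, y). {x, y}) ` ascending_arcs V E r"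
        by (auto simp: xy(1) insert_commute intro: rev_image_eqI)
    qed
  qed
qed

lemma involution_halves_ascending_arcs:
  assumes "simple_graph V E" "inj_on r V"
  shows "involution_halves (arcs V E) prod.swap (ascending_arcs V E r)"
  using assms by unfold_locales (simp_all add: finite_arcs ascending_arcs_disjoint ascending_arcs_covers)

section \<open>Reduction of the Grover determinant to the vertices\<close>

definition grover_coeff :: "'a set \<Rightarrow> ('a \<Rightarrow> 'a \<Rightarrow> bool) \<Rightarrow> real \<Rightarrow> real \<Rightarrow> 'a \<Rightarrow> real" where
  "grover_coeff V E a b v = (2 / real (deg V E v) - 1) * a + b"

lemma grover_eq:
  "grover V E a b e f = (if snd f = fst e then grover_coeff V E a b (fst e) else 0)
     - b * (if f = prod.swap e then 1 else 0)"
  by (cases e; cases f) (auto simp: grover_def grover_coeff_def)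

lemma idm_minus_grover:
  assumes "finite V" "e \<in> arcs V E"
  shows "idm e f - u * grover V E a b e f
    = idm e f + u * b * (if f = prod.swap e then 1 else 0)
      - (\<Sum>v\<in>V. (u * (if v = fst e then 1 else 0)) * (grover_coeff V E a b v * (if snd f = v then 1 else 0)))"
proof -
  have "fst e \<in> V" using assms(2) by (auto simp: arcs_def)
  have "(\<Sum>v\<in>V. (u * (if v = fst e then 1 else 0)) * (grover_coeff V E a b v * (if snd f = v then 1 else 0)))
      = (\<Sum>v\<in>V. if v = fst e then u * (grover_coeff V E a b v * (if snd f = v then 1 else 0)) else 0)"
    by (rule sum.cong) auto
  also have "\<dots> = u * (if snd f = fst e then grover_coeff V E a b (fst e) else 0)"
    using \<open>finite V\<close> \<open>fst e \<in> V\<close> by (simp add: sum.delta)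
  finally show ?thesis by (simp add: grover_eq algebra_simps)
qed

lemma sum_arcs_grover_coeff:
  assumes G: "simple_graph V E" and "v \<in> V" "w \<in> V"
  shows "(\<Sum>e\<in>arcs V E. (grover_coeff V E a b v * (if snd e = v then 1 else 0))
      * (u * (if w = fst e then 1 else 0) - t * (u * (if w = snd e then 1 else 0))))
    = u * grover_coeff V E a b v * ((if E v w then 1 else 0) - t * real (deg V E v) * idm v w)"
proof -
  let ?c = "grover_coeff V E a b v"
  have "(\<Sum>e\<in>arcs V E. (?c * (if snd e = v then 1 else 0))
      * (u * (if w = fst e then 1 else 0) - t * (u * (if w = snd e then 1 else 0))))
    = (\<Sum>e\<in>arcs V E. if snd e = v then ?c * u * ((if w = fst e then 1 else 0) - t * idm v w) else 0)"
    by (rule sum.cong) (auto simp: idm_def algebra_simps)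
  also have "\<dots> = (\<Sum>x | x \<in> V \<and> E v x. ?c * u * ((if w = x then 1 else 0) - t * idm v w))"
    by (rule sum_arcs_into[OF G \<open>v \<in> V\<close>])
  also have "\<dots> = ?c * u * ((\<Sum>x | x \<in> V \<and> E v x. if w = x then 1 else 0) - t * idm v w * real (deg V E v))"
    by (simp add: sum_distrib_left[symmetric] sum_subtractf deg_def)
  also have "(\<Sum>x | x \<in> V \<and> E v x. if w = x then 1 else 0) = (if E v w then 1 else (0::real))"
    using simple_graphD(1)[OF G] \<open>w \<in> V\<close> by (simp add: sum.delta)
  finally show ?thesis by (simp add: algebra_simps)
qed

lemma matmul_degmat:
  assumes "finite V" "x \<in> V"
  shows "matmul V (degmat V E) M x y = real (deg V E x) * M x y"
proof -
  have "matmul V (degmat V E) M x y = (\<Sum>k\<in>V. if x = k then real (deg V E x) * M k y else 0)"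
    unfolding matmul_def degmat_def by (rule sum.cong) auto
  then show ?thesis using assms by simp
qed

lemma det_on_degmat:
  assumes "finite V"
  shows "det_on V (degmat V E) = (\<Prod>v\<in>V. real (deg V E v))"
proof -
  have "degmat V E = (\<lambda>x y. real (deg V E x) * idm x y)"
    by (auto simp: fun_eq_iff degmat_def idm_def)
  then show ?thesis using det_on_diagonal[OF assms] by simp
qed

lemma det_on_degmat_factor:
  assumes G: "simple_graph V E" and deg: "\<And>v. v \<in> V \<Longrightarrow> deg V E v > 0"
  shows "det_on V (\<lambda>x y. matmul V (degmat V E)
            (\<lambda>i j. (1 + b * (2 * a - b) * u\<^sup>2) * idm i j + b * (b - a) * u\<^sup>2 * degmat V E i j) x y
          - u * Ad V E a b x y)
    = (\<Prod>v\<in>V. real (deg V E v))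
      * det_on V (\<lambda>v w. (1 - b\<^sup>2 * u\<^sup>2) * idm v w
          - u * grover_coeff V E a b v * ((if E v w then 1 else 0) - u * b * real (deg V E v) * idm v w))"
    (is "det_on V ?M = _ * det_on V ?N")
proof -
  note fin = simple_graphD(1)[OF G]
  have "?M x y = matmul V (degmat V E) ?N x y" if "x \<in> V" for x y
    using deg[OF that] simple_graphD(5)[OF G, of x]
    by (simp add: matmul_degmat[OF fin that] grover_coeff_def degmat_def Ad_def idm_def
        power2_eq_square field_simps)
  then have "det_on V ?M = det_on V (matmul V (degmat V E) ?N)"
    by (rule det_on_cong)
  then show ?thesis
    by (simp add: det_on_matmul[OF fin] det_on_degmat[OF fin])
qed

theorem theorem5:
  fixes V :: "'a set" and E :: "'a \<Rightarrow> 'a \<Rightarrow> bool" and a b u :: real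
  assumes "simple_graph V E" and "graph_connected V E" and "card V \<ge> 2"
    and "0 \<le> a" and "a \<le> 1"
    and "1 - b\<^sup>2 * u\<^sup>2 \<noteq> 0"
  shows "det_on (arcs V E) (\<lambda>e f. idm e f - u * grover V E a b e f)
    = (1 - b\<^sup>2 * u\<^sup>2) powi (int (card (edges V E)) - int (card V))
        / (\<Prod>v\<in>V. real (deg V E v))
      * det_on V (\<lambda>x y. matmul V (degmat V E)
            (\<lambda>i j. (1 + b * (2 * a - b) * u\<^sup>2) * idm i j + b * (b - a) * u\<^sup>2 * degmat V E i j) x y
          - u * Ad V E a b x y)"
proof -
  let ?s = "1 - b\<^sup>2 * u\<^sup>2" and ?c = "grover_coeff V E a b"
  note G = assms(1) and fin = simple_graphD(1)[OF assms(1)]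
  obtain r :: "'a \<Rightarrow> nat" where "inj_on r V"
    using ex_bij_betw_finite_nat[OF fin] bij_betw_imp_inj_on by blast
  let ?H = "ascending_arcs V E r"
  interpret involution_halves "arcs V E" prod.swap ?H
    using involution_halves_ascending_arcs[OF G \<open>inj_on r V\<close>] .
  have s_eq: "1 - (u * b)\<^sup>2 = ?s" and t: "(u * b)\<^sup>2 \<noteq> 1"
    using assms(6) by (simp_all add: power_mult_distrib mult.commute)
  have "det_on (arcs V E) (\<lambda>e f. idm e f - u * grover V E a b e f)
      = det_on (arcs V E) (\<lambda>e f. idm e f + u * b * (if f = prod.swap e then 1 else 0)
          - (\<Sum>v\<in>V. (u * (if v = fst e then 1 else 0)) * (?c v * (if snd f = v then 1 else 0))))"
    by (rule det_on_cong) (rule idm_minus_grover[OF fin])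
  also have "\<dots> = ?s ^ card ?H / ?s ^ card V * det_on V (\<lambda>v w. ?s * idm v w
      - u * ?c v * ((if E v w then 1 else 0) - u * b * real (deg V E v) * idm v w))"
    unfolding det_on_involution_sylvester[OF fin t] s_eq
    by (intro arg_cong2[where f = "(*)"] refl det_on_cong) (simp add: sum_arcs_grover_coeff[OF G])
  also have "\<dots> = ?s powi (int (card (edges V E)) - int (card V)) / (\<Prod>v\<in>V. real (deg V E v))
      * det_on V (\<lambda>x y. matmul V (degmat V E)
            (\<lambda>i j. (1 + b * (2 * a - b) * u\<^sup>2) * idm i j + b * (b - a) * u\<^sup>2 * degmat V E i j) x y
          - u * Ad V E a b x y)"
    using assms(6) deg_gt_0[OF assms(1-3)] prod_pos[of V "\<lambda>v. real (deg V E v)"]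
      bij_betw_same_card[OF bij_betw_ascending_arcs_edges[OF G \<open>inj_on r V\<close>]]
    by (simp add: det_on_degmat_factor[OF G] power_int_diff)
  finally show ?thesis .
qed

end
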